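(* Let $A,B,C,D$ be real random variables on a common probability space with finite second moments, $\mathbb{E}[A]\neq0$, $\mathbb{E}[C]\neq 0$, and set $R=\mathbb{E}[A]/\mathbb{E}[C]$. Let $n,m\ge1$, let $(A_i,B_i,C_i,D_i)_{i=1,\dots,n}$ be i.i.d. copies of $(A,B,C,D)$, and let $(B_i,D_i)_{i=n+1,\dots,n+m}$ be i.i.d. copies of $(B,D)$, independent of the first $n$ samples. For $\alpha,\beta\in\mathbb{R}$ define the exact and approximate control-variate numerators and denominators $$N_\alpha=\overline{A_n}+\alpha(\mathbb{E}[B]-\overline{B_n}),\quad M_\beta=\overline{C_n}+\beta(\mathbb{E}[D]-\overline{D_n}),$$ $$\tilde N_\alpha=\overline{A_n}+\alpha(\overline{B_{n+m}}-\overline{B_n}),\quad \tilde M_\beta=\overline{C_n}+\beta(\overline{D_{n+m}}-\overline{D_n}).$$ Then for all $\alpha,\beta\in\mathbb{R}$, $$\Phi(\tilde N_\alpha,\tilde M_\beta)-\Phi(\overline{A_n},\overline{C_n})=\frac{m}{n+m}\Big(\Phi(N_\alpha,M_\beta)-\Phi(\overline{A_n},\overline{C_n})\Big),$$ $$\Phi(\tilde N_\alpha,\overline{C_n})-\Phi(\overline{A_n},\overline{C_n})=\frac{m}{n+m}\Big(\Phi(N_\alpha,\overline{C_n})-\Phi(\overline{A_n},\overline{C_n})\Big).$$ Consequently the minimizers over $(\alpha,\beta)$ (resp. over $\alpha$) of the approximate-control-variate quantities coincide with those of the exact-control-variate quantities.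
   Context: For random variables $X$ with samples $X_1,X_2,\dots$, $\overline{X_k}=\frac1k\sum_{i=1}^k X_i$. For real random variables $X,Z$ with finite second moments and $\mathbb{E}[Z]\neq0$, define the first-order (delta-method) approximation of the variance of the ratio $X/Z$: $$\Phi(X,Z)=\frac{\mathrm{Var}(X)}{\mathbb{E}[Z]^2}+\frac{\mathbb{E}[X]^2}{\mathbb{E}[Z]^4}\mathrm{Var}(Z)-2\frac{\mathbb{E}[X]}{\mathbb{E}[Z]^3}\mathrm{Cov}(X,Z).$$ The paper uses $\Phi$ of numerator and denominator estimators as the variance of the corresponding ratio estimator of $R$: $\overline{A_n}/\overline{C_n}$ (MC/MC), $N_\alpha/M_\beta$ (CV/CV, with known $\mathbb{E}[B],\mathbb{E}[D]$), $N_\alpha/\overline{C_n}$ (CV/MC), and their approximate-control-variate analogues $\tilde N_\alpha/\tilde M_\beta$ (ACV/ACV) and $\tilde N_\alpha/\overline{C_n}$ (ACV/MC), in which the unknown control-variate means are replaced by sample means over $n+m$ samples. *)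

theory Defs
  imports "HOL-Probability.Probability"
begin

definition smean :: "(nat \<Rightarrow> 'a \<Rightarrow> real) \<Rightarrow> nat \<Rightarrow> 'a \<Rightarrow> real" where
  "smean X k = (\<lambda>\<omega>. (\<Sum>i<k. X i \<omega>) / real k)"

definition Ex :: "'a measure \<Rightarrow> ('a \<Rightarrow> real) \<Rightarrow> real" where
  "Ex M X = integral\<^sup>L M X"

definition Var :: "'a measure \<Rightarrow> ('a \<Rightarrow> real) \<Rightarrow> real" where
  "Var M X = integral\<^sup>L M (\<lambda>\<omega>. (X \<omega> - Ex M X)\<^sup>2)"

definition Cov :: "'a measure \<Rightarrow> ('a \<Rightarrow> real) \<Rightarrow> ('a \<Rightarrow> real) \<Rightarrow> real" where
  "Cov M X Z = integral\<^sup>L M (\<lambda>\<omega>. (X \<omega> - Ex M X) * (Z \<omega> - Ex M Z))"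

text \<open>First-order (delta-method) approximation of the variance of the ratio X/Z.\<close>
definition Phi :: "'a measure \<Rightarrow> ('a \<Rightarrow> real) \<Rightarrow> ('a \<Rightarrow> real) \<Rightarrow> real" where
  "Phi M X Z = Var M X / (Ex M Z)^2 + (Ex M X)^2 / (Ex M Z)^4 * Var M Z
              - 2 * Ex M X / (Ex M Z)^3 * Cov M X Z"

end

(*
  Every estimator involved is an affine combination of sample means, and for independent
  samples the covariance of a mean over k samples of X with a mean over l samples of Y is
  Cov(X, Y) / max k l, since only the min k l shared indices contribute. Replacing the known
  control mean E[B] by the mean over all n + m samples therefore leaves all expectations
  unchanged and multiplies every covariance term involving a control by
  1/n - 1/(n+m) = (m/(n+m)) * 1/n instead of 1/n. For fixed means Phi is an affine function
  of Var X, Var Z and Cov(X, Z), so the excess of Phi over its plain Monte Carlo value scales by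
  m/(n+m) > 0, and a positive rescaling does not move minimizers.
*)
theory Submission
  imports Defs
begin

section \<open>Covariance and the delta-method variance\<close>

definition sq_integrable :: "'a measure \<Rightarrow> ('a \<Rightarrow> real) \<Rightarrow> bool" where
  "sq_integrable M f \<longleftrightarrow> f \<in> borel_measurable M \<and> integrable M (\<lambda>x. (f x)\<^sup>2)"

lemma Var_eq_Cov: "Var M f = Cov M f f"
  by (simp add: Var_def Cov_def power2_eq_square)

lemma Cov_commute: "Cov M f g = Cov M g f"
  by (simp add: Cov_def mult.commute)

lemma Cov_scale_left: "Cov M (\<lambda>x. c * f x) g = c * Cov M f g"
proof -
  have "(\<lambda>x. (c * f x - Ex M (\<lambda>x. c * f x)) * (g x - Ex M g))
      = (\<lambda>x. c * ((f x - Ex M f) * (g x - Ex M g)))"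
    by (simp add: Ex_def fun_eq_iff algebra_simps)
  then show ?thesis
    by (simp add: Cov_def)
qed

lemma Cov_divide_left: "Cov M (\<lambda>x. f x / c) g = Cov M f g / c"
  using Cov_scale_left[of M "inverse c" f g] by (simp add: divide_inverse mult.commute)

lemma Cov_divide_right: "Cov M f (\<lambda>x. g x / c) = Cov M f g / c"
  by (simp add: Cov_commute[of M f] Cov_divide_left)

lemma Phi_diff_eq_scaled:
  assumes "Ex M X' = Ex M X0" "Ex M X = Ex M X0" "Ex M Z' = Ex M Z0" "Ex M Z = Ex M Z0"
    and "Var M X' - Var M X0 = r * (Var M X - Var M X0)"
    and "Var M Z' - Var M Z0 = r * (Var M Z - Var M Z0)"
    and "Cov M X' Z' - Cov M X0 Z0 = r * (Cov M X Z - Cov M X0 Z0)"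
  shows "Phi M X' Z' - Phi M X0 Z0 = r * (Phi M X Z - Phi M X0 Z0)"
proof -
  define k1 k2 k3 where "k1 = 1 / (Ex M Z0)\<^sup>2" and "k2 = (Ex M X0)\<^sup>2 / (Ex M Z0) ^ 4"
    and "k3 = 2 * Ex M X0 / (Ex M Z0) ^ 3"
  have Phi_eq: "Phi M U V = k1 * Var M U + k2 * Var M V - k3 * Cov M U V"
    if "Ex M U = Ex M X0" "Ex M V = Ex M Z0" for U V
    using that by (simp add: Phi_def k1_def k2_def k3_def)
  have "Phi M X' Z' - Phi M X0 Z0
      = k1 * (Var M X' - Var M X0) + k2 * (Var M Z' - Var M Z0) - k3 * (Cov M X' Z' - Cov M X0 Z0)"
    using assms(1-4) by (simp add: Phi_eq algebra_simps)
  also have "\<dots> = r * (k1 * (Var M X - Var M X0) + k2 * (Var M Z - Var M Z0) - k3 * (Cov M X Z - Cov M X0 Z0))"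
    unfolding assms(5-7) by (simp add: algebra_simps)
  also have "\<dots> = r * (Phi M X Z - Phi M X0 Z0)"
    using assms(1-4) by (simp add: Phi_eq algebra_simps)
  finally show ?thesis .
qed

lemma minimizer_iff_of_pos_affine:
  fixes f g :: "'b \<Rightarrow> real"
  assumes "r > 0" and "\<And>x. f x - c = r * (g x - c)"
  shows "(\<forall>y. f x \<le> f y) \<longleftrightarrow> (\<forall>y. g x \<le> g y)"
proof -
  have "f x \<le> f y \<longleftrightarrow> g x \<le> g y" for y
    using assms(2)[of x] assms(2)[of y] \<open>r > 0\<close> by (smt (verit) mult_le_cancel_left_pos)
  then show ?thesis by blast
qed

context prob_space
begin

lemma sq_integrable_integrable: "sq_integrable M f \<Longrightarrow> integrable M f"
  by (auto simp: sq_integrable_def intro: square_integrable_imp_integrable)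

lemma sq_integrable_mult:
  assumes "sq_integrable M f" "sq_integrable M g"
  shows "integrable M (\<lambda>x. f x * g x)"
proof (rule Bochner_Integration.integrable_bound)
  show "integrable M (\<lambda>x. (f x)\<^sup>2 + (g x)\<^sup>2)"
    using assms by (simp add: sq_integrable_def)
  show "(\<lambda>x. f x * g x) \<in> borel_measurable M"
    using assms by (simp add: sq_integrable_def borel_measurable_times)
  have "\<bar>a * b\<bar> \<le> a\<^sup>2 + b\<^sup>2" for a b :: real
    using sum_squares_bound[of "\<bar>a\<bar>" "\<bar>b\<bar>"] mult_nonneg_nonneg[OF abs_ge_zero abs_ge_zero, of a b]
    unfolding abs_mult mult.assoc power2_abs by linarith
  then show "AE x in M. norm (f x * g x) \<le> norm ((f x)\<^sup>2 + (g x)\<^sup>2)"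
    by simp
qed

lemma sq_integrable_const [simp]: "sq_integrable M (\<lambda>x. c)"
  by (simp add: sq_integrable_def)

lemma sq_integrable_scale: "sq_integrable M f \<Longrightarrow> sq_integrable M (\<lambda>x. c * f x)"
  by (simp add: sq_integrable_def power_mult_distrib borel_measurable_times)

lemma sq_integrable_divide: "sq_integrable M f \<Longrightarrow> sq_integrable M (\<lambda>x. f x / c)"
  by (simp add: sq_integrable_def power_divide borel_measurable_divide)

lemma sq_integrable_add:
  assumes "sq_integrable M f" "sq_integrable M g"
  shows "sq_integrable M (\<lambda>x. f x + g x)"
proof -
  have "integrable M (\<lambda>x. (f x)\<^sup>2 + (g x)\<^sup>2 + 2 * (f x * g x))"
    using assms sq_integrable_mult by (simp add: sq_integrable_def)
  then show ?thesis
    using assms by (simp add: sq_integrable_def power2_sum mult.assoc borel_measurable_add)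
qed

lemma sq_integrable_diff:
  "sq_integrable M f \<Longrightarrow> sq_integrable M g \<Longrightarrow> sq_integrable M (\<lambda>x. f x - g x)"
  using sq_integrable_add[of f "\<lambda>x. -1 * g x"] sq_integrable_scale[of g "-1"] by simp

lemma sq_integrable_sum:
  "(\<And>i. i \<in> I \<Longrightarrow> sq_integrable M (f i)) \<Longrightarrow> sq_integrable M (\<lambda>x. \<Sum>i\<in>I. f i x)"
  by (induction I rule: infinite_finite_induct) (auto intro: sq_integrable_add)

lemma Ex_const [simp]: "Ex M (\<lambda>x. c) = c"
  by (simp add: Ex_def prob_space)

lemma Cov_const_left [simp]: "Cov M (\<lambda>x. c) g = 0"
  by (simp add: Cov_def)

lemma Cov_const_right [simp]: "Cov M f (\<lambda>x. c) = 0"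
  by (simp add: Cov_def)

lemma Cov_eq_Ex_mult:
  assumes "sq_integrable M f" "sq_integrable M g"
  shows "Cov M f g = Ex M (\<lambda>x. f x * g x) - Ex M f * Ex M g"
proof -
  have "integrable M f" "integrable M g" "integrable M (\<lambda>x. f x * g x)"
    using assms by (simp_all add: sq_integrable_integrable sq_integrable_mult)
  then show ?thesis
    by (simp add: Cov_def Ex_def prob_space algebra_simps)
qed

lemma Cov_add_left:
  assumes "sq_integrable M f" "sq_integrable M g" "sq_integrable M h"
  shows "Cov M (\<lambda>x. f x + g x) h = Cov M f h + Cov M g h"
proof -
  have "integrable M f" "integrable M g" "integrable M (\<lambda>x. f x * h x)" "integrable M (\<lambda>x. g x * h x)"
    using assms by (simp_all add: sq_integrable_integrable sq_integrable_mult)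
  then show ?thesis
    using assms by (simp add: Cov_eq_Ex_mult sq_integrable_add Ex_def distrib_right algebra_simps)
qed

lemma Cov_diff_left:
  assumes "sq_integrable M f" "sq_integrable M g" "sq_integrable M h"
  shows "Cov M (\<lambda>x. f x - g x) h = Cov M f h - Cov M g h"
  using Cov_add_left[OF assms(1) sq_integrable_scale[OF assms(2), of "-1"] assms(3)]
    Cov_scale_left[of M "-1" g h]
  by simp

lemma Cov_diff_right:
  assumes "sq_integrable M f" "sq_integrable M g" "sq_integrable M h"
  shows "Cov M f (\<lambda>x. g x - h x) = Cov M f g - Cov M f h"
  using Cov_diff_left[OF assms(2,3,1)] by (simp add: Cov_commute[of M f])

lemma Cov_sum_left:
  assumes "\<And>i. i \<in> I \<Longrightarrow> sq_integrable M (f i)" "sq_integrable M g"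
  shows "Cov M (\<lambda>x. \<Sum>i\<in>I. f i x) g = (\<Sum>i\<in>I. Cov M (f i) g)"
  using assms(1)
proof (induction I rule: infinite_finite_induct)
  case (insert i I)
  then show ?case
    using assms(2) by (simp add: Cov_add_left sq_integrable_sum)
qed simp_all

lemma Cov_sum_sum:
  assumes "\<And>i. i \<in> I \<Longrightarrow> sq_integrable M (f i)" "\<And>j. j \<in> J \<Longrightarrow> sq_integrable M (g j)"
  shows "Cov M (\<lambda>x. \<Sum>i\<in>I. f i x) (\<lambda>x. \<Sum>j\<in>J. g j x) = (\<Sum>i\<in>I. \<Sum>j\<in>J. Cov M (f i) (g j))"
proof -
  have "Cov M (f i) (\<lambda>x. \<Sum>j\<in>J. g j x) = (\<Sum>j\<in>J. Cov M (f i) (g j))" if "i \<in> I" for i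
    using Cov_sum_left[of J g "f i"] assms that by (simp add: Cov_commute[of M "f i"])
  then show ?thesis
    using assms by (simp add: Cov_sum_left sq_integrable_sum)
qed

lemma Cov_add_scale_left:
  assumes "sq_integrable M f" "sq_integrable M g" "sq_integrable M h"
  shows "Cov M (\<lambda>x. f x + a * g x) h = Cov M f h + a * Cov M g h"
  using assms by (simp add: Cov_add_left sq_integrable_scale Cov_scale_left)

lemma Cov_add_scaled:
  assumes "sq_integrable M f" "sq_integrable M g" "sq_integrable M h" "sq_integrable M k"
  shows "Cov M (\<lambda>x. f x + a * g x) (\<lambda>x. h x + b * k x)
    = Cov M f h + a * Cov M g h + b * Cov M f k + a * b * Cov M g k"
proof -
  have right: "Cov M u (\<lambda>x. h x + b * k x) = Cov M u h + b * Cov M u k" if "sq_integrable M u" for u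
    using Cov_add_scale_left[OF assms(3,4) that, of b] by (simp add: Cov_commute[of M u])
  have "Cov M (\<lambda>x. f x + a * g x) (\<lambda>x. h x + b * k x)
      = Cov M f (\<lambda>x. h x + b * k x) + a * Cov M g (\<lambda>x. h x + b * k x)"
    using assms by (simp add: Cov_add_scale_left sq_integrable_add sq_integrable_scale)
  then show ?thesis
    using assms by (simp add: right algebra_simps)
qed

lemma indep_vars_indep_var_comp:
  assumes "indep_vars (\<lambda>_. borel) V I" "i \<in> I" "j \<in> I" "i \<noteq> j"
    and "f \<in> borel_measurable borel" "g \<in> borel_measurable borel"
  shows "indep_var borel (\<lambda>\<omega>. f (V i \<omega>)) borel (\<lambda>\<omega>. g (V j \<omega>))"
proof -
  have "indep_var (PiM {i} (\<lambda>_. borel)) (\<lambda>\<omega>. restrict (\<lambda>k. V k \<omega>) {i})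
      (PiM {j} (\<lambda>_. borel)) (\<lambda>\<omega>. restrict (\<lambda>k. V k \<omega>) {j})"
    using assms(1-4) by (intro indep_var_restrict) auto
  moreover have "(\<lambda>x. f (x i)) \<in> measurable (PiM {i} (\<lambda>_. borel)) borel"
    "(\<lambda>x. g (x j)) \<in> measurable (PiM {j} (\<lambda>_. borel)) borel"
    by (auto intro!: measurable_compose[OF _ assms(5)] measurable_compose[OF _ assms(6)]
        measurable_component_singleton)
  ultimately have "indep_var borel ((\<lambda>x. f (x i)) \<circ> (\<lambda>\<omega>. restrict (\<lambda>k. V k \<omega>) {i}))
      borel ((\<lambda>x. g (x j)) \<circ> (\<lambda>\<omega>. restrict (\<lambda>k. V k \<omega>) {j}))"
    by (rule indep_var_compose)
  then show ?thesis
    by (simp add: comp_def)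
qed

lemma indep_var_Cov_eq_0:
  assumes "indep_var borel f borel g" "sq_integrable M f" "sq_integrable M g"
  shows "Cov M f g = 0"
  using assms by (simp add: Cov_eq_Ex_mult Ex_def indep_var_lebesgue_integral sq_integrable_integrable)

end

lemma Ex_comp_distr_eq:
  fixes h :: "'b::topological_space \<Rightarrow> real"
  assumes "Y \<in> borel_measurable M" "Y' \<in> borel_measurable M" "distr M borel Y = distr M borel Y'"
    and "h \<in> borel_measurable borel"
  shows "Ex M (\<lambda>x. h (Y x)) = Ex M (\<lambda>x. h (Y' x))"
  using assms integral_distr[OF assms(1,4)] integral_distr[OF assms(2,4)] by (simp add: Ex_def)

lemma sq_integrable_comp_distr_eq:
  fixes h :: "'b::topological_space \<Rightarrow> real"
  assumes "Y \<in> borel_measurable M" "Y' \<in> borel_measurable M" "distr M borel Y = distr M borel Y'"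
    and "h \<in> borel_measurable borel"
  shows "sq_integrable M (\<lambda>x. h (Y x)) \<longleftrightarrow> sq_integrable M (\<lambda>x. h (Y' x))"
proof -
  have sq: "(\<lambda>y. (h y)\<^sup>2) \<in> borel_measurable borel"
    using assms(4) by measurable
  have "integrable M (\<lambda>x. (h (Y x))\<^sup>2) \<longleftrightarrow> integrable M (\<lambda>x. (h (Y' x))\<^sup>2)"
    using integrable_distr_eq[OF assms(1) sq] integrable_distr_eq[OF assms(2) sq] assms(3) by simp
  then show ?thesis
    using assms by (simp add: sq_integrable_def measurable_compose[OF _ assms(4)])
qed

lemma Cov_comp_distr_eq:
  fixes f g :: "'b::topological_space \<Rightarrow> real"
  assumes "Y \<in> borel_measurable M" "Y' \<in> borel_measurable M" "distr M borel Y = distr M borel Y'"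
    and "f \<in> borel_measurable borel" "g \<in> borel_measurable borel"
  shows "Cov M (\<lambda>x. f (Y x)) (\<lambda>x. g (Y x)) = Cov M (\<lambda>x. f (Y' x)) (\<lambda>x. g (Y' x))"
proof -
  define c d where "c = Ex M (\<lambda>x. f (Y' x))" and "d = Ex M (\<lambda>x. g (Y' x))"
  have "Ex M (\<lambda>x. f (Y x)) = c" "Ex M (\<lambda>x. g (Y x)) = d"
    using Ex_comp_distr_eq[OF assms(1-3)] assms(4,5) unfolding c_def d_def by blast+
  moreover have "(\<lambda>y. (f y - c) * (g y - d)) \<in> borel_measurable borel"
    using assms(4,5) by measurable
  ultimately show ?thesis
    using Ex_comp_distr_eq[OF assms(1-3), of "\<lambda>y. (f y - c) * (g y - d)"]
    by (simp add: Cov_def Ex_def c_def d_def)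
qed

section \<open>Sample means and control-variate estimators\<close>

definition cv_mean :: "(nat \<Rightarrow> 'a \<Rightarrow> real) \<Rightarrow> (nat \<Rightarrow> 'a \<Rightarrow> real) \<Rightarrow> nat \<Rightarrow> real \<Rightarrow> real \<Rightarrow> 'a \<Rightarrow> real"
  where "cv_mean X Y n \<mu> \<alpha> = (\<lambda>\<omega>. smean X n \<omega> + \<alpha> * (\<mu> - smean Y n \<omega>))"

definition acv_mean :: "(nat \<Rightarrow> 'a \<Rightarrow> real) \<Rightarrow> (nat \<Rightarrow> 'a \<Rightarrow> real) \<Rightarrow> nat \<Rightarrow> nat \<Rightarrow> real \<Rightarrow> 'a \<Rightarrow> real"
  where "acv_mean X Y n m \<alpha> = (\<lambda>\<omega>. smean X n \<omega> + \<alpha> * (smean Y (n + m) \<omega> - smean Y n \<omega>))"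

lemma cv_mean_0 [simp]: "cv_mean X Y n \<mu> 0 = smean X n"
  by (simp add: cv_mean_def)

lemma acv_mean_0 [simp]: "acv_mean X Y n m 0 = smean X n"
  by (simp add: acv_mean_def)

lemma smean_cong: "(\<And>i. i < k \<Longrightarrow> X i = Y i) \<Longrightarrow> smean X k = smean Y k"
  unfolding smean_def by (simp add: fun_eq_iff)

lemma cv_mean_cong:
  assumes "\<And>i. i < n \<Longrightarrow> X i = X' i" "\<And>i. i < n \<Longrightarrow> Y i = Y' i"
  shows "cv_mean X Y n = cv_mean X' Y' n"
  using smean_cong[of n X X'] smean_cong[of n Y Y'] assms by (simp add: cv_mean_def[abs_def])

lemma acv_mean_cong:
  assumes "\<And>i. i < n \<Longrightarrow> X i = X' i" "\<And>i. i < n + m \<Longrightarrow> Y i = Y' i"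
  shows "acv_mean X Y n m = acv_mean X' Y' n m"
  using smean_cong[of n X X'] smean_cong[of n Y Y'] smean_cong[of "n + m" Y Y'] assms
  by (simp add: acv_mean_def[abs_def])

context prob_space
begin

lemma sq_integrable_smean:
  "(\<And>i. i < k \<Longrightarrow> sq_integrable M (X i)) \<Longrightarrow> sq_integrable M (smean X k)"
  unfolding smean_def by (intro sq_integrable_divide sq_integrable_sum) simp

lemma integrable_smean:
  assumes "\<And>i. i < k \<Longrightarrow> integrable M (X i)"
  shows "integrable M (smean X k)"
  unfolding smean_def using assms by (intro integrable_divide integrable_sum) auto

lemma Cov_smean_smean:
  assumes "0 < k" "0 < l"
    and "\<And>i. i < k \<Longrightarrow> sq_integrable M (X i)" "\<And>j. j < l \<Longrightarrow> sq_integrable M (Y j)"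
    and "\<And>i j. i < k \<Longrightarrow> j < l \<Longrightarrow> Cov M (X i) (Y j) = (if i = j then c else 0)"
  shows "Cov M (smean X k) (smean Y l) = c / max k l"
proof -
  have common_indices: "{..<k} \<inter> {..<l} = {..<min k l}"
    by auto
  have "Cov M (\<lambda>x. \<Sum>i<k. X i x) (\<lambda>x. \<Sum>j<l. Y j x) = (\<Sum>i<k. \<Sum>j<l. Cov M (X i) (Y j))"
    using assms(3,4) by (intro Cov_sum_sum) auto
  also have "\<dots> = (\<Sum>i<k. \<Sum>j<l. if i = j then c else 0)"
    using assms(5) by simp
  also have "\<dots> = (\<Sum>i\<in>{..<k} \<inter> {..<l}. c)"
    by (subst sum.inter_restrict) auto
  also have "\<dots> = min k l * c"
    using common_indices by simp
  finally have "Cov M (\<lambda>x. \<Sum>i<k. X i x) (\<lambda>x. \<Sum>j<l. Y j x) = min k l * c" .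
  then have "Cov M (smean X k) (smean Y l) = min k l * c / (k * l)"
    by (simp add: smean_def Cov_divide_left Cov_divide_right)
  then show ?thesis
    using assms(1,2) by (simp add: min_def max_def)
qed

lemma Ex_smean:
  assumes "0 < k" "\<And>i. i < k \<Longrightarrow> integrable M (X i)" "\<And>i. i < k \<Longrightarrow> Ex M (X i) = \<mu>"
  shows "Ex M (smean X k) = \<mu>"
  using assms by (simp add: smean_def Ex_def)

lemma Ex_cv_mean:
  assumes "0 < n" "\<And>i. i < n \<Longrightarrow> integrable M (X i)"
    and "\<And>i. i < n \<Longrightarrow> integrable M (Y i)" "\<And>i. i < n \<Longrightarrow> Ex M (Y i) = \<mu>"
  shows "Ex M (cv_mean X Y n \<mu> \<alpha>) = Ex M (smean X n)"
proof -
  have "Ex M (smean Y n) = \<mu>"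
    using assms by (intro Ex_smean) auto
  then show ?thesis
    using assms by (simp add: cv_mean_def Ex_def integrable_smean prob_space)
qed

lemma Ex_acv_mean:
  assumes "0 < n" "\<And>i. i < n \<Longrightarrow> integrable M (X i)"
    and "\<And>i. i < n + m \<Longrightarrow> integrable M (Y i)" "\<And>i. i < n + m \<Longrightarrow> Ex M (Y i) = \<mu>"
  shows "Ex M (acv_mean X Y n m \<alpha>) = Ex M (smean X n)"
proof -
  have "Ex M (smean Y n) = \<mu>" "Ex M (smean Y (n + m)) = \<mu>"
    using assms by (intro Ex_smean; auto)+
  then show ?thesis
    using assms by (simp add: acv_mean_def Ex_def integrable_smean prob_space)
qed

lemma Cov_acv_mean:
  fixes X Y Z W :: "nat \<Rightarrow> 'a \<Rightarrow> real"
  assumes "0 < n"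
    and "\<And>i. i < n \<Longrightarrow> sq_integrable M (X i)" "\<And>i. i < n \<Longrightarrow> sq_integrable M (Z i)"
    and "\<And>i. i < n + m \<Longrightarrow> sq_integrable M (Y i)" "\<And>i. i < n + m \<Longrightarrow> sq_integrable M (W i)"
    and "\<And>i j. i < n \<Longrightarrow> j < n \<Longrightarrow> Cov M (X i) (Z j) = (if i = j then cXZ else 0)"
    and "\<And>i j. i < n \<Longrightarrow> j < n + m \<Longrightarrow> Cov M (X i) (W j) = (if i = j then cXW else 0)"
    and "\<And>i j. i < n + m \<Longrightarrow> j < n \<Longrightarrow> Cov M (Y i) (Z j) = (if i = j then cYZ else 0)"
    and "\<And>i j. i < n + m \<Longrightarrow> j < n + m \<Longrightarrow> Cov M (Y i) (W j) = (if i = j then cYW else 0)"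
  shows "Cov M (acv_mean X Y n m \<alpha>) (acv_mean Z W n m \<beta>) - Cov M (smean X n) (smean Z n)
    = real m / real (n + m) * (Cov M (cv_mean X Y n \<mu> \<alpha>) (cv_mean Z W n \<nu> \<beta>) - Cov M (smean X n) (smean Z n))"
proof -
  have sq: "sq_integrable M (smean X n)" "sq_integrable M (smean Z n)"
    "sq_integrable M (smean Y n)" "sq_integrable M (smean Y (n + m))"
    "sq_integrable M (smean W n)" "sq_integrable M (smean W (n + m))"
    using assms(2-5) by (intro sq_integrable_smean; simp)+
  have cov: "Cov M (smean X n) (smean Z n) = cXZ / max n n"
    "Cov M (smean X n) (smean W n) = cXW / max n n"
    "Cov M (smean X n) (smean W (n + m)) = cXW / max n (n + m)"
    "Cov M (smean Y n) (smean Z n) = cYZ / max n n"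
    "Cov M (smean Y (n + m)) (smean Z n) = cYZ / max (n + m) n"
    "Cov M (smean Y n) (smean W n) = cYW / max n n"
    "Cov M (smean Y n) (smean W (n + m)) = cYW / max n (n + m)"
    "Cov M (smean Y (n + m)) (smean W n) = cYW / max (n + m) n"
    "Cov M (smean Y (n + m)) (smean W (n + m)) = cYW / max (n + m) (n + m)"
    using assms by (intro Cov_smean_smean; simp)+
  have approx: "Cov M (acv_mean X Y n m \<alpha>) (acv_mean Z W n m \<beta>)
      = Cov M (smean X n) (smean Z n)
        + \<alpha> * (Cov M (smean Y (n + m)) (smean Z n) - Cov M (smean Y n) (smean Z n))
        + \<beta> * (Cov M (smean X n) (smean W (n + m)) - Cov M (smean X n) (smean W n))
        + \<alpha> * \<beta> * (Cov M (smean Y (n + m)) (smean W (n + m)) - Cov M (smean Y (n + m)) (smean W n)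
                     - Cov M (smean Y n) (smean W (n + m)) + Cov M (smean Y n) (smean W n))"
    unfolding acv_mean_def using sq
    by (simp add: Cov_add_scaled sq_integrable_diff Cov_diff_left Cov_diff_right)
  have exact: "Cov M (cv_mean X Y n \<mu> \<alpha>) (cv_mean Z W n \<nu> \<beta>)
      = Cov M (smean X n) (smean Z n) - \<alpha> * Cov M (smean Y n) (smean Z n)
        - \<beta> * Cov M (smean X n) (smean W n) + \<alpha> * \<beta> * Cov M (smean Y n) (smean W n)"
    unfolding cv_mean_def using sq
    by (simp add: Cov_add_scaled sq_integrable_diff Cov_diff_left Cov_diff_right)
  \<comment> \<open>The remaining algebra is the identity 1/n - 1/(n+m) = m/(n+m) * 1/n.\<close>
  define s where "s = real (n + m)"
  have max: "max n n = n" "max n (n + m) = n + m" "max (n + m) n = n + m" "max (n + m) (n + m) = n + m"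
    by simp_all
  have m: "real m = s - real n" and pos: "0 < real n" "0 < s"
    using \<open>0 < n\<close> by (simp_all add: s_def)
  show ?thesis
    unfolding approx exact cov max s_def[symmetric] m using pos by (simp add: field_simps)
qed

end

section \<open>The two-block sampling scheme\<close>

locale acv_sampling = prob_space M for M :: "'a measure" +
  fixes A B C D :: "'a \<Rightarrow> real" and As Bs Cs Ds :: "nat \<Rightarrow> 'a \<Rightarrow> real" and n m :: nat
  assumes sq: "sq_integrable M A" "sq_integrable M B" "sq_integrable M C" "sq_integrable M D"
    and n_pos: "0 < n"
    and measS: "\<And>i. i < n \<Longrightarrow> As i \<in> borel_measurable M"
      "\<And>i. i < n \<Longrightarrow> Cs i \<in> borel_measurable M"
      "\<And>i. i < n + m \<Longrightarrow> Bs i \<in> borel_measurable M"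
      "\<And>i. i < n + m \<Longrightarrow> Ds i \<in> borel_measurable M"
    and indep: "indep_vars (\<lambda>_. borel)
      (\<lambda>i \<omega>. if i < n then (As i \<omega>, Bs i \<omega>, Cs i \<omega>, Ds i \<omega>)
               else ((0::real), Bs i \<omega>, (0::real), Ds i \<omega>)) {..<n + m}"
    and dist1: "\<And>i. i < n \<Longrightarrow> distr M borel (\<lambda>\<omega>. (As i \<omega>, Bs i \<omega>, Cs i \<omega>, Ds i \<omega>))
      = distr M borel (\<lambda>\<omega>. (A \<omega>, B \<omega>, C \<omega>, D \<omega>))"
    and dist2: "\<And>i. n \<le> i \<Longrightarrow> i < n + m \<Longrightarrow>
      distr M borel (\<lambda>\<omega>. (Bs i \<omega>, Ds i \<omega>)) = distr M borel (\<lambda>\<omega>. (B \<omega>, D \<omega>))"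
begin

definition sample :: "nat \<Rightarrow> 'a \<Rightarrow> real \<times> real \<times> real \<times> real" where
  "sample i \<omega> = (if i < n then (As i \<omega>, Bs i \<omega>, Cs i \<omega>, Ds i \<omega>) else (0, Bs i \<omega>, 0, Ds i \<omega>))"

definition population :: "nat \<Rightarrow> 'a \<Rightarrow> real \<times> real \<times> real \<times> real" where
  "population i = (if i < n then (\<lambda>\<omega>. (A \<omega>, B \<omega>, C \<omega>, D \<omega>)) else (\<lambda>\<omega>. (0, B \<omega>, 0, D \<omega>)))"

lemma sample_coordinates:
  "i < n \<Longrightarrow> As i = (\<lambda>\<omega>. fst (sample i \<omega>))"
  "Bs i = (\<lambda>\<omega>. fst (snd (sample i \<omega>)))"
  "i < n \<Longrightarrow> Cs i = (\<lambda>\<omega>. fst (snd (snd (sample i \<omega>))))"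
  "Ds i = (\<lambda>\<omega>. snd (snd (snd (sample i \<omega>))))"
  by (simp_all add: sample_def fun_eq_iff)

lemma population_coordinates:
  "i < n \<Longrightarrow> (\<lambda>\<omega>. fst (population i \<omega>)) = A"
  "(\<lambda>\<omega>. fst (snd (population i \<omega>))) = B"
  "i < n \<Longrightarrow> (\<lambda>\<omega>. fst (snd (snd (population i \<omega>)))) = C"
  "(\<lambda>\<omega>. snd (snd (snd (population i \<omega>)))) = D"
  by (simp_all add: population_def)

lemma measurable_ABCD:
  "A \<in> borel_measurable M" "B \<in> borel_measurable M" "C \<in> borel_measurable M" "D \<in> borel_measurable M"
  using sq by (simp_all add: sq_integrable_def)

lemma sample_measurable: "i < n + m \<Longrightarrow> sample i \<in> borel_measurable M"
  unfolding sample_def using measS by (cases "i < n") simp_all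

lemma population_measurable: "population i \<in> borel_measurable M"
  using measurable_ABCD by (simp add: population_def)

lemma distr_sample:
  assumes "i < n + m"
  shows "distr M borel (sample i) = distr M borel (population i)"
proof (cases "i < n")
  case True
  then show ?thesis
    using dist1[OF True] by (simp add: sample_def[abs_def] population_def)
next
  case False
  define pad :: "real \<times> real \<Rightarrow> real \<times> real \<times> real \<times> real" where "pad x = (0, fst x, 0, snd x)" for x
  have pad: "pad \<in> borel_measurable borel"
    unfolding pad_def by (intro borel_measurable_continuous_onI continuous_intros)
  have "sample i = pad \<circ> (\<lambda>\<omega>. (Bs i \<omega>, Ds i \<omega>))" "population i = pad \<circ> (\<lambda>\<omega>. (B \<omega>, D \<omega>))"
    using False by (auto simp: sample_def population_def pad_def)
  moreover have "(\<lambda>\<omega>. (Bs i \<omega>, Ds i \<omega>)) \<in> borel_measurable M" "(\<lambda>\<omega>. (B \<omega>, D \<omega>)) \<in> borel_measurable M"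
    using measS(3,4)[OF assms] measurable_ABCD(2,4) by simp_all
  ultimately show ?thesis
    using dist2[of i] False assms by (simp add: distr_distr[OF pad, symmetric])
qed

lemma sq_integrable_sample:
  assumes "i < n + m" "f \<in> borel_measurable borel" "sq_integrable M (\<lambda>\<omega>. f (population i \<omega>))"
  shows "sq_integrable M (\<lambda>\<omega>. f (sample i \<omega>))"
  using assms sq_integrable_comp_distr_eq[OF sample_measurable population_measurable distr_sample]
  by blast

lemma Ex_sample:
  assumes "i < n + m" "f \<in> borel_measurable borel"
  shows "Ex M (\<lambda>\<omega>. f (sample i \<omega>)) = Ex M (\<lambda>\<omega>. f (population i \<omega>))"
  using assms Ex_comp_distr_eq[OF sample_measurable population_measurable distr_sample]
  by blast

lemma Cov_samples:
  assumes "i < n + m" "j < n + m" "f \<in> borel_measurable borel" "g \<in> borel_measurable borel"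
    and "sq_integrable M (\<lambda>\<omega>. f (population i \<omega>))" "sq_integrable M (\<lambda>\<omega>. g (population j \<omega>))"
  shows "Cov M (\<lambda>\<omega>. f (sample i \<omega>)) (\<lambda>\<omega>. g (sample j \<omega>))
    = (if i = j then Cov M (\<lambda>\<omega>. f (population i \<omega>)) (\<lambda>\<omega>. g (population i \<omega>)) else 0)"
proof (cases "i = j")
  case True
  then show ?thesis
    using assms Cov_comp_distr_eq[OF sample_measurable population_measurable distr_sample] by simp
next
  case False
  have "indep_vars (\<lambda>_. borel) sample {..<n + m}"
    using indep by (simp add: sample_def[abs_def])
  then have "indep_var borel (\<lambda>\<omega>. f (sample i \<omega>)) borel (\<lambda>\<omega>. g (sample j \<omega>))"
    using assms False by (intro indep_vars_indep_var_comp) auto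
  then show ?thesis
    using assms False by (simp add: indep_var_Cov_eq_0 sq_integrable_sample)
qed

lemma coordinates_measurable:
  "(fst :: real \<times> real \<times> real \<times> real \<Rightarrow> real) \<in> borel_measurable borel"
  "(\<lambda>x :: real \<times> real \<times> real \<times> real. fst (snd x)) \<in> borel_measurable borel"
  "(\<lambda>x :: real \<times> real \<times> real \<times> real. fst (snd (snd x))) \<in> borel_measurable borel"
  "(\<lambda>x :: real \<times> real \<times> real \<times> real. snd (snd (snd x))) \<in> borel_measurable borel"
  by (intro borel_measurable_continuous_onI continuous_intros)+

lemma sq_integrable_samples:
  "i < n \<Longrightarrow> sq_integrable M (As i)" "i < n + m \<Longrightarrow> sq_integrable M (Bs i)"
  "i < n \<Longrightarrow> sq_integrable M (Cs i)" "i < n + m \<Longrightarrow> sq_integrable M (Ds i)"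
  by (simp_all add: sample_coordinates, (intro sq_integrable_sample;
      simp add: population_coordinates coordinates_measurable sq)+)

lemma Ex_control_samples:
  "i < n + m \<Longrightarrow> Ex M (Bs i) = Ex M B" "i < n + m \<Longrightarrow> Ex M (Ds i) = Ex M D"
  by (simp_all only: sample_coordinates(2,4),
      (subst Ex_sample; simp add: population_coordinates coordinates_measurable)+)

lemma Ex_estimators:
  "Ex M (acv_mean As Bs n m \<alpha>) = Ex M (smean As n)"
  "Ex M (cv_mean As Bs n (Ex M B) \<alpha>) = Ex M (smean As n)"
  "Ex M (acv_mean Cs Ds n m \<beta>) = Ex M (smean Cs n)"
  "Ex M (cv_mean Cs Ds n (Ex M D) \<beta>) = Ex M (smean Cs n)"
  using n_pos sq_integrable_samples Ex_control_samples
  by (intro Ex_acv_mean Ex_cv_mean; simp add: sq_integrable_integrable)+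

lemma Cov_acv_mean_samples:
  fixes p p' q q' :: "real \<times> real \<times> real \<times> real \<Rightarrow> real"
  assumes meas: "p \<in> borel_measurable borel" "p' \<in> borel_measurable borel"
      "q \<in> borel_measurable borel" "q' \<in> borel_measurable borel"
    and pop: "\<And>i. i < n \<Longrightarrow> (\<lambda>\<omega>. p (population i \<omega>)) = P"
      "\<And>i. (\<lambda>\<omega>. p' (population i \<omega>)) = P'"
      "\<And>i. i < n \<Longrightarrow> (\<lambda>\<omega>. q (population i \<omega>)) = Q"
      "\<And>i. (\<lambda>\<omega>. q' (population i \<omega>)) = Q'"
    and sq_pop: "sq_integrable M P" "sq_integrable M P'" "sq_integrable M Q" "sq_integrable M Q'"
  defines "X \<equiv> \<lambda>i \<omega>. p (sample i \<omega>)" and "Y \<equiv> \<lambda>i \<omega>. p' (sample i \<omega>)"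
    and "Z \<equiv> \<lambda>i \<omega>. q (sample i \<omega>)" and "W \<equiv> \<lambda>i \<omega>. q' (sample i \<omega>)"
  shows "Cov M (acv_mean X Y n m \<alpha>) (acv_mean Z W n m \<beta>) - Cov M (smean X n) (smean Z n)
    = real m / real (n + m) * (Cov M (cv_mean X Y n \<mu> \<alpha>) (cv_mean Z W n \<nu> \<beta>) - Cov M (smean X n) (smean Z n))"
proof (rule Cov_acv_mean[OF n_pos])
  show "sq_integrable M (X i)" "sq_integrable M (Z i)" if "i < n" for i
    using that pop sq_pop meas by (auto simp: X_def Z_def intro!: sq_integrable_sample)
  show "sq_integrable M (Y i)" "sq_integrable M (W i)" if "i < n + m" for i
    using that pop sq_pop meas by (auto simp: Y_def W_def intro!: sq_integrable_sample)
  show "Cov M (X i) (Z j) = (if i = j then Cov M P Q else 0)" if "i < n" "j < n" for i j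
    using that pop sq_pop meas by (simp add: X_def Z_def Cov_samples)
  show "Cov M (X i) (W j) = (if i = j then Cov M P Q' else 0)" if "i < n" "j < n + m" for i j
    using that pop sq_pop meas by (simp add: X_def W_def Cov_samples)
  show "Cov M (Y i) (Z j) = (if i = j then Cov M P' Q else 0)" if "i < n + m" "j < n" for i j
    using that pop sq_pop meas by (simp add: Y_def Z_def Cov_samples)
  show "Cov M (Y i) (W j) = (if i = j then Cov M P' Q' else 0)" if "i < n + m" "j < n + m" for i j
    using that pop sq_pop meas by (simp add: Y_def W_def Cov_samples)
qed

lemma estimators_of_samples:
  defines "SA \<equiv> \<lambda>i \<omega>. fst (sample i \<omega>)" and "SB \<equiv> \<lambda>i \<omega>. fst (snd (sample i \<omega>))"
    and "SC \<equiv> \<lambda>i \<omega>. fst (snd (snd (sample i \<omega>)))" and "SD \<equiv> \<lambda>i \<omega>. snd (snd (snd (sample i \<omega>)))"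
  shows "smean As n = smean SA n" "cv_mean As Bs n = cv_mean SA SB n" "acv_mean As Bs n m = acv_mean SA SB n m"
    "smean Cs n = smean SC n" "cv_mean Cs Ds n = cv_mean SC SD n" "acv_mean Cs Ds n m = acv_mean SC SD n m"
  by (intro smean_cong cv_mean_cong acv_mean_cong; simp add: sample_coordinates SA_def SB_def SC_def SD_def)+

lemma Cov_estimators:
  "Cov M (acv_mean As Bs n m \<alpha>) (acv_mean As Bs n m \<alpha>) - Cov M (smean As n) (smean As n)
    = real m / real (n + m) * (Cov M (cv_mean As Bs n \<mu> \<alpha>) (cv_mean As Bs n \<mu> \<alpha>)
      - Cov M (smean As n) (smean As n))"
  "Cov M (acv_mean Cs Ds n m \<beta>) (acv_mean Cs Ds n m \<beta>) - Cov M (smean Cs n) (smean Cs n)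
    = real m / real (n + m) * (Cov M (cv_mean Cs Ds n \<nu> \<beta>) (cv_mean Cs Ds n \<nu> \<beta>)
      - Cov M (smean Cs n) (smean Cs n))"
  "Cov M (acv_mean As Bs n m \<alpha>) (acv_mean Cs Ds n m \<beta>) - Cov M (smean As n) (smean Cs n)
    = real m / real (n + m) * (Cov M (cv_mean As Bs n \<mu> \<alpha>) (cv_mean Cs Ds n \<nu> \<beta>)
      - Cov M (smean As n) (smean Cs n))"
  unfolding estimators_of_samples
  using Cov_acv_mean_samples[OF coordinates_measurable(1,2,1,2) population_coordinates(1,2,1,2) sq(1,2,1,2)]
    Cov_acv_mean_samples[OF coordinates_measurable(3,4,3,4) population_coordinates(3,4,3,4) sq(3,4,3,4)]
    Cov_acv_mean_samples[OF coordinates_measurable population_coordinates sq]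
  by simp_all

lemma Phi_acv_mean:
  "Phi M (acv_mean As Bs n m \<alpha>) (acv_mean Cs Ds n m \<beta>) - Phi M (smean As n) (smean Cs n)
   = real m / real (n + m) * (Phi M (cv_mean As Bs n (Ex M B) \<alpha>) (cv_mean Cs Ds n (Ex M D) \<beta>)
       - Phi M (smean As n) (smean Cs n))"
  by (rule Phi_diff_eq_scaled) (simp_all only: Ex_estimators Var_eq_Cov Cov_estimators)

end

theorem mainTheorem7:
  fixes M :: "'a measure"
    and A B C D :: "'a \<Rightarrow> real"
    and As Bs Cs Ds :: "nat \<Rightarrow> 'a \<Rightarrow> real"
    and n m :: nat
  assumes P: "prob_space M"
    and meas: "A \<in> borel_measurable M" "B \<in> borel_measurable M"
              "C \<in> borel_measurable M" "D \<in> borel_measurable M"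
    and sq: "integrable M (\<lambda>\<omega>. (A \<omega>)\<^sup>2)" "integrable M (\<lambda>\<omega>. (B \<omega>)\<^sup>2)"
            "integrable M (\<lambda>\<omega>. (C \<omega>)\<^sup>2)" "integrable M (\<lambda>\<omega>. (D \<omega>)\<^sup>2)"
    and EA: "Ex M A \<noteq> 0" and EC: "Ex M C \<noteq> 0"
    and n: "n \<ge> 1" and m: "m \<ge> 1"
    and measS: "\<And>i. i < n \<Longrightarrow> As i \<in> borel_measurable M"
               "\<And>i. i < n \<Longrightarrow> Cs i \<in> borel_measurable M"
               "\<And>i. i < n + m \<Longrightarrow> Bs i \<in> borel_measurable M"
               "\<And>i. i < n + m \<Longrightarrow> Ds i \<in> borel_measurable M"
    and indep: "prob_space.indep_vars M (\<lambda>_. borel)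
        (\<lambda>i \<omega>. if i < n then (As i \<omega>, Bs i \<omega>, Cs i \<omega>, Ds i \<omega>)
                 else ((0::real), Bs i \<omega>, (0::real), Ds i \<omega>)) {..<n + m}"
    and dist1: "\<And>i. i < n \<Longrightarrow>
        distr M borel (\<lambda>\<omega>. (As i \<omega>, Bs i \<omega>, Cs i \<omega>, Ds i \<omega>))
        = distr M borel (\<lambda>\<omega>. (A \<omega>, B \<omega>, C \<omega>, D \<omega>))"
    and dist2: "\<And>i. n \<le> i \<Longrightarrow> i < n + m \<Longrightarrow>
        distr M borel (\<lambda>\<omega>. (Bs i \<omega>, Ds i \<omega>)) = distr M borel (\<lambda>\<omega>. (B \<omega>, D \<omega>))"
  defines "N \<equiv> \<lambda>\<alpha> \<omega>. smean As n \<omega> + \<alpha> * (Ex M B - smean Bs n \<omega>)"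
    and "Mb \<equiv> \<lambda>\<beta> \<omega>. smean Cs n \<omega> + \<beta> * (Ex M D - smean Ds n \<omega>)"
    and "Nt \<equiv> \<lambda>\<alpha> \<omega>. smean As n \<omega> + \<alpha> * (smean Bs (n + m) \<omega> - smean Bs n \<omega>)"
    and "Mt \<equiv> \<lambda>\<beta> \<omega>. smean Cs n \<omega> + \<beta> * (smean Ds (n + m) \<omega> - smean Ds n \<omega>)"
  shows "(\<forall>\<alpha> \<beta>::real.
            Phi M (Nt \<alpha>) (Mt \<beta>) - Phi M (smean As n) (smean Cs n)
              = real m / real (n + m) * (Phi M (N \<alpha>) (Mb \<beta>) - Phi M (smean As n) (smean Cs n)))
       \<and> (\<forall>\<alpha>::real.
            Phi M (Nt \<alpha>) (smean Cs n) - Phi M (smean As n) (smean Cs n)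
              = real m / real (n + m) * (Phi M (N \<alpha>) (smean Cs n) - Phi M (smean As n) (smean Cs n)))
       \<and> (\<forall>\<alpha> \<beta>::real.
            (\<forall>\<alpha>' \<beta>'. Phi M (Nt \<alpha>) (Mt \<beta>) \<le> Phi M (Nt \<alpha>') (Mt \<beta>'))
            \<longleftrightarrow> (\<forall>\<alpha>' \<beta>'. Phi M (N \<alpha>) (Mb \<beta>) \<le> Phi M (N \<alpha>') (Mb \<beta>')))
       \<and> (\<forall>\<alpha>::real.
            (\<forall>\<alpha>'. Phi M (Nt \<alpha>) (smean Cs n) \<le> Phi M (Nt \<alpha>') (smean Cs n))
            \<longleftrightarrow> (\<forall>\<alpha>'. Phi M (N \<alpha>) (smean Cs n) \<le> Phi M (N \<alpha>') (smean Cs n)))"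
proof -
  interpret acv_sampling M A B C D As Bs Cs Ds n m
    using P meas sq n measS indep dist1 dist2
    by (intro acv_sampling.intro acv_sampling_axioms.intro) (simp_all add: sq_integrable_def)
  have estimators: "N = cv_mean As Bs n (Ex M B)" "Mb = cv_mean Cs Ds n (Ex M D)"
    "Nt = acv_mean As Bs n m" "Mt = acv_mean Cs Ds n m"
    by (simp_all add: N_def Mb_def Nt_def Mt_def cv_mean_def[abs_def] acv_mean_def[abs_def])
  define r where "r = real m / real (n + m)"
  have "r > 0"
    using n m by (simp add: r_def)
  have pair: "Phi M (Nt \<alpha>) (Mt \<beta>) - Phi M (smean As n) (smean Cs n)
      = r * (Phi M (N \<alpha>) (Mb \<beta>) - Phi M (smean As n) (smean Cs n))" for \<alpha> \<beta>
    unfolding estimators r_def by (rule Phi_acv_mean)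
  have single: "Phi M (Nt \<alpha>) (smean Cs n) - Phi M (smean As n) (smean Cs n)
      = r * (Phi M (N \<alpha>) (smean Cs n) - Phi M (smean As n) (smean Cs n))" for \<alpha>
    using pair[of \<alpha> 0] by (simp add: estimators)
  have "(\<forall>\<alpha>' \<beta>'. Phi M (Nt \<alpha>) (Mt \<beta>) \<le> Phi M (Nt \<alpha>') (Mt \<beta>'))
      \<longleftrightarrow> (\<forall>\<alpha>' \<beta>'. Phi M (N \<alpha>) (Mb \<beta>) \<le> Phi M (N \<alpha>') (Mb \<beta>'))" for \<alpha> \<beta>
    using minimizer_iff_of_pos_affine[OF \<open>r > 0\<close>, of "\<lambda>(\<alpha>, \<beta>). Phi M (Nt \<alpha>) (Mt \<beta>)"
        "Phi M (smean As n) (smean Cs n)" "\<lambda>(\<alpha>, \<beta>). Phi M (N \<alpha>) (Mb \<beta>)" "(\<alpha>, \<beta>)"] pair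
    by (simp add: split_paired_all)
  moreover have "(\<forall>\<alpha>'. Phi M (Nt \<alpha>) (smean Cs n) \<le> Phi M (Nt \<alpha>') (smean Cs n))
      \<longleftrightarrow> (\<forall>\<alpha>'. Phi M (N \<alpha>) (smean Cs n) \<le> Phi M (N \<alpha>') (smean Cs n))" for \<alpha>
    using minimizer_iff_of_pos_affine[OF \<open>r > 0\<close> single] .
  ultimately show ?thesis
    using pair single unfolding r_def by blast
qed

end
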